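(* Let $(z_n)_{n=0}^{n_f}$ be the Markov chain on $\mathbb{R}^d$ with $z_0\sim q_\phi(z_0\mid x)$ and $$z_n=\mu_{n-1}+\sigma_{n-1}U_{n-1},\quad \mu_{n-1}=z_{n-1}+f(z_{n-1},t_{n-1})\Delta t_{n-1},\quad \sigma_{n-1}=g(t_{n-1})\sqrt{\Delta t_{n-1}}>0,\quad 1\le n\le n_f,$$ with $U_0,\dots,U_{n_f-1}$ i.i.d. $\mathcal{N}(0,I_d)$ independent of $z_0$ (so the transitions are exactly Gaussian, $q_\phi(z_n\mid z_{n-1})=\mathcal{N}(\mu_{n-1},\sigma_{n-1}^2I_d)$). Let $q_\phi(z_n)$ denote the marginal density of $z_n$, let $s_\theta:\mathbb{R}^d\times[0,T]\to\mathbb{R}^d$ be a score network, and let $N$ be uniformly distributed on $\{1,\dots,n_f\}$, independent of $z_0$ and the $U_n$'s. Assume all expectations below are finite and that differentiation under the integral sign in $q_\phi(z_n)=\int q_\phi(z_n\mid z_{n-1})q_\phi(z_{n-1})dz_{n-1}$ is permitted. Define the Euler–Maruyama discretized cross entropy $$\widehat{\mathrm{CE}}:=H(q_\phi(z_{n_f}))+\tfrac12\mathbb{E}_{N,z_N}\big[g^2(t_N)\|\nabla_{z_N}\log q_\phi(z_N)-s_\theta(z_N,t_N)\|_2^2\big]+\tfrac12\mathbb{E}_{N,z_N}\big[(2f(z_N,t_N)-g^2(t_N)\nabla_{z_N}\log q_\phi(z_N))^{\top}\nabla_{z_N}\log q_\phi(z_N)\big],$$ which the paper uses as the approximation $\mathrm{CE}(q_\phi(z_0\mid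 x)\|p_\theta(z_0))\approx\widehat{\mathrm{CE}}$. Then $$\widehat{\mathrm{CE}} = H(q_\phi(z_{n_f}))+\tfrac12\mathbb{E}_{N,z_N}\big[g^2(t_N)\|s_\theta(z_N,t_N)\|_2^2\big]+\mathbb{E}_{N,z_{N-1},z_N}\Big[g^2(t_N)\frac{U_{N-1}}{\sigma_{N-1}}\cdot\big(s_\theta(z_N,t_N)-s_\theta(\mu_{N-1},t_N)\big)\Big]-\mathbb{E}_{N,z_{N-1},z_N}\Big[\frac{U_{N-1}}{\sigma_{N-1}}\cdot\big(f(z_N,t_N)-f(\mu_{N-1},t_N)\big)\Big].$$
   Context: Setting: a VAE with encoder density $q_\phi(z_0\mid x)$ on the latent space $\mathbb{R}^d$ (for a fixed data point $x$) and a latent prior $p_\theta(z_0)$ learned by a score-based model whose score network $s_\theta(z,t)$ approximates $\nabla_z\log$ of the time-$t$ marginal. The latent forward diffusion is $dz_t=f(z_t,t)dt+g(t)dw_t$ on $[0,T]$ with possibly nonlinear drift $f:\mathbb{R}^d\times[0,T]\to\mathbb{R}^d$ and diffusion coefficient $g:[0,T]\to\mathbb{R}$; $0=t_0<\dots<t_{n_f}=T$, $\Delta t_{n-1}=t_n-t_{n-1}$. $H(q)=-\int q\log q$ is the differential entropy and $\mathrm{CE}(q\|p)=-\int q\log p$ the cross entropy. *)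

theory Defs
  imports "HOL-Analysis.Analysis"
begin

text \<open>Euler--Maruyama discretisation of the latent forward SDE, in density form.
  The latent space R^d is an arbitrary Euclidean space 'a (d = DIM('a)).\<close>

definition gauss :: "real \<Rightarrow> 'a::euclidean_space \<Rightarrow> real" where
  "gauss s w = (1 / (sqrt (2 * pi) * s)) ^ DIM('a) * exp (- (norm w)\<^sup>2 / (2 * s\<^sup>2))"

definition em_mu :: "('a::euclidean_space \<Rightarrow> real \<Rightarrow> 'a) \<Rightarrow> (nat \<Rightarrow> real) \<Rightarrow> nat \<Rightarrow> 'a \<Rightarrow> 'a" where
  "em_mu f t n y = y + (t (Suc n) - t n) *\<^sub>R f y (t n)"

definition em_sigma :: "(real \<Rightarrow> real) \<Rightarrow> (nat \<Rightarrow> real) \<Rightarrow> nat \<Rightarrow> real" where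
  "em_sigma g t n = g (t n) * sqrt (t (Suc n) - t n)"

primrec marg :: "('a::euclidean_space \<Rightarrow> real) \<Rightarrow> ('a \<Rightarrow> real \<Rightarrow> 'a) \<Rightarrow> (real \<Rightarrow> real)
    \<Rightarrow> (nat \<Rightarrow> real) \<Rightarrow> nat \<Rightarrow> 'a \<Rightarrow> real" where
  "marg q0 f g t 0 = q0"
| "marg q0 f g t (Suc n) = (\<lambda>z. \<integral>y. gauss (em_sigma g t n) (z - em_mu f t n y) * marg q0 f g t n y \<partial>lborel)"

definition entropy :: "('a::euclidean_space \<Rightarrow> real) \<Rightarrow> real" where
  "entropy q = - (\<integral>z. q z * ln (q z) \<partial>lborel)"

definition EN :: "nat \<Rightarrow> (nat \<Rightarrow> 'a::euclidean_space \<Rightarrow> real) \<Rightarrow> (nat \<Rightarrow> 'a \<Rightarrow> real) \<Rightarrow> real" where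
  "EN nf q h = (\<Sum>n = 1..nf. \<integral>z. q n z * h n z \<partial>lborel) / real nf"

text \<open>E_{N,z_{N-1},z_N}[h(N, z_{N-1}, U_{N-1}, z_N)], where z_{N-1} ~ q_{N-1},
  U_{N-1} ~ N(0,I) independent, and z_N = mu_{N-1}(z_{N-1}) + sigma_{N-1} U_{N-1}.
  The arguments of h are (n, y = z_{n-1}, u = U_{n-1}, z = z_n).\<close>
definition EJ :: "nat \<Rightarrow> (nat \<Rightarrow> 'a::euclidean_space \<Rightarrow> real) \<Rightarrow> (nat \<Rightarrow> 'a \<Rightarrow> 'a) \<Rightarrow> (nat \<Rightarrow> real)
    \<Rightarrow> (nat \<Rightarrow> 'a \<Rightarrow> 'a \<Rightarrow> 'a \<Rightarrow> real) \<Rightarrow> real" where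
  "EJ nf q mu sig h = (\<Sum>n = 1..nf.
      \<integral>yu. q (n - 1) (fst yu) * gauss 1 (snd yu)
             * h n (fst yu) (snd yu) (mu (n - 1) (fst yu) + sig (n - 1) *\<^sub>R snd yu)
        \<partial>(lborel \<Otimes>\<^sub>M lborel)) / real nf"

end

theory Submission
  imports Defs
begin

(* Expanding the squares, the two sides differ at step n by
   2 E_{q_n}[f . grad log q_n] - 2 g^2 E_{q_n}[grad log q_n . s], so it suffices to show
   E_{q_n}[grad log q_n . h] = - E[(U/sigma) . (h(z_n) - h(mu(z_{n-1})))] for h = f and h = s.
   As q_n(z) = int N(z; mu(y), sigma^2 I) q_{n-1}(y) dy is a Gaussian mixture, differentiating under
   the integral sign gives q_n grad log q_n = grad q_n
   = int N(z; mu(y), sigma^2 I) (-(z - mu(y)) / sigma^2) q_{n-1}(y) dy.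
   Integrating against h, swapping the integrals and substituting z = mu(y) + sigma u yields
   - E[U . h(z_n)] / sigma, while E[U . h(mu(z_{n-1}))] = 0 because U is centred and independent
   of z_{n-1}. *)

lemma lborel_nn_integral_affine:
  fixes f :: "'a::euclidean_space \<Rightarrow> ennreal"
  assumes "f \<in> borel_measurable borel" and "c \<noteq> 0"
  shows "(\<integral>\<^sup>+x. f x \<partial>lborel) = ennreal (\<bar>c\<bar> ^ DIM('a)) * (\<integral>\<^sup>+x. f (t + c *\<^sub>R x) \<partial>lborel)"
  using assms by (subst lborel_affine[of c t]) (simp_all add: nn_integral_density nn_integral_distr nn_integral_cmult)

lemma lborel_integral_affine:
  fixes f :: "'a::euclidean_space \<Rightarrow> 'b::{banach, second_countable_topology}"
  assumes "f \<in> borel_measurable borel" and "c \<noteq> 0"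
  shows "(\<integral>x. f x \<partial>lborel) = \<bar>c\<bar> ^ DIM('a) *\<^sub>R (\<integral>x. f (t + c *\<^sub>R x) \<partial>lborel)"
  using assms by (subst lborel_affine[of c t]) (simp_all add: integral_density integral_distr)

lemma gauss_measurable [measurable]: "gauss s \<in> borel_measurable borel"
  unfolding gauss_def by measurable

lemma gauss_nonneg: "0 \<le> s \<Longrightarrow> 0 \<le> gauss s w"
  unfolding gauss_def by simp

lemma gauss_scaleR:
  fixes u :: "'a::euclidean_space"
  assumes "0 < s"
  shows "gauss s (s *\<^sub>R u) = gauss 1 u / s ^ DIM('a)"
proof -
  have "(norm (s *\<^sub>R u))\<^sup>2 / (2 * s\<^sup>2) = (norm u)\<^sup>2 / (2 * 1\<^sup>2)"
    using assms by (simp add: power_mult_distrib)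
  then show ?thesis
    unfolding gauss_def by (simp add: power_divide power_mult_distrib)
qed

lemma integral_gauss_shift:
  fixes \<phi> :: "'a::euclidean_space \<Rightarrow> real"
  assumes "0 < \<sigma>" and [measurable]: "\<phi> \<in> borel_measurable borel"
  shows "(\<integral>z. gauss \<sigma> (z - m) * \<phi> z \<partial>lborel) = (\<integral>u. gauss 1 u * \<phi> (m + \<sigma> *\<^sub>R u) \<partial>lborel)"
  using assms
  by (subst lborel_integral_affine[where c = \<sigma> and t = m]) (simp_all add: gauss_scaleR)

lemma nn_integral_gauss_shift:
  fixes \<phi> :: "'a::euclidean_space \<Rightarrow> ennreal"
  assumes "0 < \<sigma>" and [measurable]: "\<phi> \<in> borel_measurable borel"
  shows "(\<integral>\<^sup>+z. gauss \<sigma> (z - m) * \<phi> z \<partial>lborel)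
    = (\<integral>\<^sup>+u. gauss 1 u * \<phi> (m + \<sigma> *\<^sub>R u) \<partial>lborel)"
proof -
  have "(\<integral>\<^sup>+z. gauss \<sigma> (z - m) * \<phi> z \<partial>lborel)
      = ennreal (\<sigma> ^ DIM('a))
        * (\<integral>\<^sup>+u. ennreal (gauss 1 u / \<sigma> ^ DIM('a)) * \<phi> (m + \<sigma> *\<^sub>R u) \<partial>lborel)"
    using assms by (subst lborel_nn_integral_affine[where c = \<sigma> and t = m]) (simp_all add: gauss_scaleR)
  also have "\<dots> = (\<integral>\<^sup>+u. ennreal (\<sigma> ^ DIM('a))
        * (ennreal (gauss 1 u / \<sigma> ^ DIM('a)) * \<phi> (m + \<sigma> *\<^sub>R u)) \<partial>lborel)"
    by (rule nn_integral_cmult[symmetric]) measurable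
  also have "\<dots> = (\<integral>\<^sup>+u. gauss 1 u * \<phi> (m + \<sigma> *\<^sub>R u) \<partial>lborel)"
    using assms by (intro nn_integral_cong) (simp add: mult.assoc[symmetric] ennreal_mult'[symmetric] gauss_nonneg)
  finally show ?thesis .
qed

lemma integral_gauss_inner_eq_0:
  fixes c :: "'a::euclidean_space"
  shows "(\<integral>u. gauss 1 u * (u \<bullet> c) \<partial>lborel) = 0"
proof -
  have "(\<integral>u. gauss 1 u * (u \<bullet> c) \<partial>lborel) = (\<integral>u. gauss 1 (- u) * (- u \<bullet> c) \<partial>lborel)"
    by (subst lborel_integral_affine[where c = "-1" and t = 0]) simp_all
  also have "\<dots> = - (\<integral>u. gauss 1 u * (u \<bullet> c) \<partial>lborel)"
    by (simp add: gauss_def)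
  finally show ?thesis by simp
qed

lemma integral_pair_gauss_inner_eq_0:
  fixes Q :: "'b::euclidean_space \<Rightarrow> real" and v :: "'b \<Rightarrow> 'a::euclidean_space"
  assumes "integrable (lborel \<Otimes>\<^sub>M lborel) (\<lambda>yu. Q (fst yu) * gauss 1 (snd yu) * (snd yu \<bullet> v (fst yu)))"
  shows "(\<integral>yu. Q (fst yu) * gauss 1 (snd yu) * (snd yu \<bullet> v (fst yu)) \<partial>(lborel \<Otimes>\<^sub>M lborel)) = 0"
proof -
  have "(\<integral>yu. Q (fst yu) * gauss 1 (snd yu) * (snd yu \<bullet> v (fst yu)) \<partial>(lborel \<Otimes>\<^sub>M lborel))
      = (\<integral>y. Q y * (\<integral>u. gauss 1 u * (u \<bullet> v y) \<partial>lborel) \<partial>lborel)"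
    using lborel_pair.integral_fst'[OF assms] by (simp add: mult.assoc)
  then show ?thesis by (simp add: integral_gauss_inner_eq_0)
qed

lemma GDERIV_unique:
  assumes "GDERIV f x :> D" and "GDERIV f x :> E"
  shows "D = E"
proof -
  have "(\<lambda>h. h \<bullet> D) = (\<lambda>h. h \<bullet> E)"
    using assms unfolding gderiv_def by (rule has_derivative_unique)
  then have "(D - E) \<bullet> (D - E) = 0"
    by (metis inner_diff_right right_minus_eq)
  then show ?thesis by simp
qed

lemma scaleR_gderiv_ln:
  fixes P :: "'a::euclidean_space \<Rightarrow> real"
  assumes P_nonneg: "\<And>w. 0 \<le> P w"
    and ln_P: "GDERIV (\<lambda>w. ln (P w)) z :> S"
    and P: "GDERIV P z :> D"
  shows "P z *\<^sub>R S = D"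
proof (cases "P z = 0")
  case True
  \<comment> \<open>then z minimises P, so the gradient D vanishes\<close>
  then have "(\<lambda>h. h \<bullet> D) = (\<lambda>h. 0)"
    using P unfolding gderiv_def
    by (intro differential_zero_maxmin[of z UNIV P]) (auto simp: P_nonneg)
  then have "D \<bullet> D = 0" by metis
  with True show ?thesis by simp
next
  case False
  with P_nonneg have pos: "0 < P z" by (metis order_le_less)
  have "GDERIV (\<lambda>w. ln (P w)) z :> (1 / P z) *\<^sub>R D"
    using pos by (intro GDERIV_DERIV_compose[OF P]) (auto intro!: derivative_eq_intros)
  with ln_P have "S = (1 / P z) *\<^sub>R D"
    by (rule GDERIV_unique)
  with pos show ?thesis by simp
qed

locale gauss_mixture =
  fixes Q :: "'a::euclidean_space \<Rightarrow> real" and M :: "'a \<Rightarrow> 'a" and \<sigma> :: real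
    and P :: "'a \<Rightarrow> real" and S :: "'a \<Rightarrow> 'a"
  assumes Q_measurable [measurable]: "Q \<in> borel_measurable borel"
    and Q_nonneg: "\<And>y. 0 \<le> Q y"
    and M_measurable [measurable]: "M \<in> borel_measurable borel"
    and \<sigma>_pos: "0 < \<sigma>"
    and P_eq: "\<And>z. P z = (\<integral>y. gauss \<sigma> (z - M y) * Q y \<partial>lborel)"
    and score: "\<And>z. GDERIV (\<lambda>w. ln (P w)) z :> S z"
    and integrable_grad: "\<And>z. integrable lborel
          (\<lambda>y. (gauss \<sigma> (z - M y) * Q y) *\<^sub>R (- (1 / \<sigma>\<^sup>2) *\<^sub>R (z - M y)))"
    and GDERIV_P: "\<And>z. GDERIV P z :>
          (\<integral>y. (gauss \<sigma> (z - M y) * Q y) *\<^sub>R (- (1 / \<sigma>\<^sup>2) *\<^sub>R (z - M y)) \<partial>lborel)"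
begin

lemma P_nonneg: "0 \<le> P z"
  using \<sigma>_pos by (auto simp: P_eq Q_nonneg gauss_nonneg intro!: Bochner_Integration.integral_nonneg)

lemma density_score_inner:
  "P z * (S z \<bullet> v) = (\<integral>y. gauss \<sigma> (z - M y) * (Q y * (- (1 / \<sigma>\<^sup>2) * ((z - M y) \<bullet> v))) \<partial>lborel)"
proof -
  have "P z *\<^sub>R S z = (\<integral>y. (gauss \<sigma> (z - M y) * Q y) *\<^sub>R (- (1 / \<sigma>\<^sup>2) *\<^sub>R (z - M y)) \<partial>lborel)"
    using P_nonneg score GDERIV_P by (rule scaleR_gderiv_ln)
  then have "P z * (S z \<bullet> v)
      = (\<integral>y. (gauss \<sigma> (z - M y) * Q y) *\<^sub>R (- (1 / \<sigma>\<^sup>2) *\<^sub>R (z - M y)) \<bullet> v \<partial>lborel)"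
    using integral_inner_left[OF integrable_grad, of z v] by (simp flip: inner_scaleR_left)
  then show ?thesis by (simp add: mult.assoc)
qed

lemma integral_density_score_inner:
  assumes [measurable]: "h \<in> borel_measurable borel"
    and integrable_G: "integrable (lborel \<Otimes>\<^sub>M lborel)
          (\<lambda>yu. Q (fst yu) * gauss 1 (snd yu) * (snd yu \<bullet> h (M (fst yu) + \<sigma> *\<^sub>R snd yu)))"
  shows "(\<integral>z. P z * (S z \<bullet> h z) \<partial>lborel)
    = - (1 / \<sigma>) * (\<integral>yu. Q (fst yu) * gauss 1 (snd yu) * (snd yu \<bullet> h (M (fst yu) + \<sigma> *\<^sub>R snd yu))
          \<partial>(lborel \<Otimes>\<^sub>M lborel))"
proof -
  define k where "k y z = Q y * (- (1 / \<sigma>\<^sup>2) * ((z - M y) \<bullet> h z))" for y z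
  define G where "G y u = Q y * gauss 1 u * (u \<bullet> h (M y + \<sigma> *\<^sub>R u))" for y u
  have [measurable]: "(\<lambda>p. k (fst p) (snd p)) \<in> borel_measurable (lborel \<Otimes>\<^sub>M lborel)"
    "(\<lambda>p. G (fst p) (snd p)) \<in> borel_measurable (lborel \<Otimes>\<^sub>M lborel)"
    unfolding k_def G_def by measurable
  have [measurable]: "k y \<in> borel_measurable borel" for y
    unfolding k_def by measurable
  have k_shift: "gauss 1 u * k y (M y + \<sigma> *\<^sub>R u) = - (1 / \<sigma>) * G y u" for y u
    using \<sigma>_pos by (simp add: k_def G_def power2_eq_square)
  have k_abs_shift: "ennreal (gauss 1 u) * ennreal \<bar>k y (M y + \<sigma> *\<^sub>R u)\<bar> = ennreal (1 / \<sigma>) * norm (G y u)" for y u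
  proof -
    have "gauss 1 u * \<bar>k y (M y + \<sigma> *\<^sub>R u)\<bar> = 1 / \<sigma> * \<bar>G y u\<bar>"
      using arg_cong[OF k_shift[of u y], of abs] \<sigma>_pos by (simp add: abs_mult gauss_nonneg)
    then show ?thesis
      using \<sigma>_pos by (simp add: ennreal_mult'[symmetric] gauss_nonneg)
  qed
  have "(\<integral>\<^sup>+p. norm (gauss \<sigma> (snd p - M (fst p)) * k (fst p) (snd p)) \<partial>(lborel \<Otimes>\<^sub>M lborel))
      = (\<integral>\<^sup>+y. \<integral>\<^sup>+z. ennreal (gauss \<sigma> (z - M y)) * ennreal \<bar>k y z\<bar> \<partial>lborel \<partial>lborel)"
    using \<sigma>_pos by (subst lborel.nn_integral_fst[symmetric]) (auto simp: abs_mult gauss_nonneg ennreal_mult)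
  also have "\<dots> = (\<integral>\<^sup>+y. \<integral>\<^sup>+u. ennreal (1 / \<sigma>) * norm (G y u) \<partial>lborel \<partial>lborel)"
    using \<sigma>_pos by (simp add: nn_integral_gauss_shift k_abs_shift)
  also have "\<dots> = ennreal (1 / \<sigma>) * (\<integral>\<^sup>+p. norm (G (fst p) (snd p)) \<partial>(lborel \<Otimes>\<^sub>M lborel))"
  proof -
    have [measurable]: "G y \<in> borel_measurable borel" for y
      unfolding G_def by measurable
    have "(\<lambda>y. \<integral>\<^sup>+u. norm (G y u) \<partial>lborel) \<in> borel_measurable lborel"
      by measurable
    then show ?thesis
      by (subst lborel.nn_integral_fst[symmetric]) (simp_all add: nn_integral_cmult)
  qed
  also have "\<dots> < \<infinity>"
    using integrable_G unfolding integrable_iff_bounded G_def by (simp add: ennreal_mult_less_top)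
  finally have integrable_k: "integrable (lborel \<Otimes>\<^sub>M lborel) (\<lambda>(y, z). gauss \<sigma> (z - M y) * k y z)"
    unfolding integrable_iff_bounded case_prod_beta by simp
  have "(\<integral>z. P z * (S z \<bullet> h z) \<partial>lborel) = (\<integral>z. \<integral>y. gauss \<sigma> (z - M y) * k y z \<partial>lborel \<partial>lborel)"
    by (simp only: density_score_inner k_def)
  also have "\<dots> = (\<integral>y. \<integral>z. gauss \<sigma> (z - M y) * k y z \<partial>lborel \<partial>lborel)"
    using integrable_k by (rule lborel_pair.Fubini_integral)
  also have "\<dots> = (\<integral>y. - (1 / \<sigma>) * (\<integral>u. G y u \<partial>lborel) \<partial>lborel)"
    using \<sigma>_pos by (simp add: integral_gauss_shift k_shift)
  also have "\<dots> = - (1 / \<sigma>) * (\<integral>p. G (fst p) (snd p) \<partial>(lborel \<Otimes>\<^sub>M lborel))"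
    using lborel_pair.integral_fst'[OF integrable_G] by (simp add: G_def)
  finally show ?thesis
    by (simp only: G_def)
qed

lemma integral_density_score_inner_increment:
  assumes [measurable]: "h \<in> borel_measurable borel"
    and integrable_shift: "integrable (lborel \<Otimes>\<^sub>M lborel)
          (\<lambda>yu. Q (fst yu) * gauss 1 (snd yu) * (snd yu \<bullet> h (M (fst yu) + \<sigma> *\<^sub>R snd yu)))"
    and integrable_mean: "integrable (lborel \<Otimes>\<^sub>M lborel)
          (\<lambda>yu. Q (fst yu) * gauss 1 (snd yu) * (snd yu \<bullet> h (M (fst yu))))"
  shows "(\<integral>z. P z * (S z \<bullet> h z) \<partial>lborel)
    = - (\<integral>yu. Q (fst yu) * gauss 1 (snd yu)
            * (((1 / \<sigma>) *\<^sub>R snd yu) \<bullet> (h (M (fst yu) + \<sigma> *\<^sub>R snd yu) - h (M (fst yu))))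
          \<partial>(lborel \<Otimes>\<^sub>M lborel))"
proof -
  have "(\<integral>yu. Q (fst yu) * gauss 1 (snd yu)
            * (((1 / \<sigma>) *\<^sub>R snd yu) \<bullet> (h (M (fst yu) + \<sigma> *\<^sub>R snd yu) - h (M (fst yu))))
          \<partial>(lborel \<Otimes>\<^sub>M lborel))
      = (\<integral>yu. 1 / \<sigma> * (Q (fst yu) * gauss 1 (snd yu) * (snd yu \<bullet> h (M (fst yu) + \<sigma> *\<^sub>R snd yu)))
            - 1 / \<sigma> * (Q (fst yu) * gauss 1 (snd yu) * (snd yu \<bullet> h (M (fst yu)))) \<partial>(lborel \<Otimes>\<^sub>M lborel))"
    by (intro Bochner_Integration.integral_cong refl) (simp add: inner_diff_right algebra_simps)
  also have "\<dots> = 1 / \<sigma> * (\<integral>yu. Q (fst yu) * gauss 1 (snd yu) * (snd yu \<bullet> h (M (fst yu) + \<sigma> *\<^sub>R snd yu))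
          \<partial>(lborel \<Otimes>\<^sub>M lborel))"
    using integrable_shift integrable_mean integral_pair_gauss_inner_eq_0[OF integrable_mean] by simp
  finally show ?thesis
    unfolding integral_density_score_inner[OF assms(1) integrable_shift] by (simp only: mult_minus_left)
qed

lemma score_matching_identity:
  fixes F V :: "'a \<Rightarrow> 'a" and c :: real
  assumes [measurable]: "F \<in> borel_measurable borel" "V \<in> borel_measurable borel"
    and integrable_error: "integrable lborel (\<lambda>z. P z * (c * (norm (S z - V z))\<^sup>2))"
    and integrable_drift_score: "integrable lborel (\<lambda>z. P z * ((2 *\<^sub>R F z - c *\<^sub>R S z) \<bullet> S z))"
    and integrable_V: "integrable lborel (\<lambda>z. P z * (c * (norm (V z))\<^sup>2))"
    and integrable_F_S: "integrable lborel (\<lambda>z. P z * (F z \<bullet> S z))"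
    and integrable_S_V: "integrable lborel (\<lambda>z. P z * (c * (S z \<bullet> V z)))"
    and "integrable (lborel \<Otimes>\<^sub>M lborel)
          (\<lambda>yu. Q (fst yu) * gauss 1 (snd yu) * (snd yu \<bullet> V (M (fst yu) + \<sigma> *\<^sub>R snd yu)))"
    and "integrable (lborel \<Otimes>\<^sub>M lborel)
          (\<lambda>yu. Q (fst yu) * gauss 1 (snd yu) * (snd yu \<bullet> V (M (fst yu))))"
    and "integrable (lborel \<Otimes>\<^sub>M lborel)
          (\<lambda>yu. Q (fst yu) * gauss 1 (snd yu) * (snd yu \<bullet> F (M (fst yu) + \<sigma> *\<^sub>R snd yu)))"
    and "integrable (lborel \<Otimes>\<^sub>M lborel)
          (\<lambda>yu. Q (fst yu) * gauss 1 (snd yu) * (snd yu \<bullet> F (M (fst yu))))"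
  shows "(\<integral>z. P z * (c * (norm (S z - V z))\<^sup>2) \<partial>lborel)
           + (\<integral>z. P z * ((2 *\<^sub>R F z - c *\<^sub>R S z) \<bullet> S z) \<partial>lborel)
    = (\<integral>z. P z * (c * (norm (V z))\<^sup>2) \<partial>lborel)
      + 2 * (\<integral>yu. Q (fst yu) * gauss 1 (snd yu)
            * (c * (((1 / \<sigma>) *\<^sub>R snd yu) \<bullet> (V (M (fst yu) + \<sigma> *\<^sub>R snd yu) - V (M (fst yu)))))
          \<partial>(lborel \<Otimes>\<^sub>M lborel))
      - 2 * (\<integral>yu. Q (fst yu) * gauss 1 (snd yu)
            * (((1 / \<sigma>) *\<^sub>R snd yu) \<bullet> (F (M (fst yu) + \<sigma> *\<^sub>R snd yu) - F (M (fst yu))))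
          \<partial>(lborel \<Otimes>\<^sub>M lborel))"
proof -
  define J where "J h = (\<integral>yu. Q (fst yu) * gauss 1 (snd yu)
      * (((1 / \<sigma>) *\<^sub>R snd yu) \<bullet> (h (M (fst yu) + \<sigma> *\<^sub>R snd yu) - h (M (fst yu))))
    \<partial>(lborel \<Otimes>\<^sub>M lborel))" for h
  have expand: "P z * (c * (norm (S z - V z))\<^sup>2) + P z * ((2 *\<^sub>R F z - c *\<^sub>R S z) \<bullet> S z)
      = P z * (c * (norm (V z))\<^sup>2) + 2 * (P z * (F z \<bullet> S z)) - 2 * (P z * (c * (S z \<bullet> V z)))" for z
    by (simp add: power2_norm_eq_inner inner_diff_left inner_diff_right inner_commute algebra_simps)
  have S_F: "(\<integral>z. P z * (S z \<bullet> F z) \<partial>lborel) = - J F"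
    unfolding J_def by (rule integral_density_score_inner_increment) fact+
  have S_V: "(\<integral>z. P z * (S z \<bullet> V z) \<partial>lborel) = - J V"
    unfolding J_def by (rule integral_density_score_inner_increment) fact+
  have J_V_scaled: "(\<integral>yu. Q (fst yu) * gauss 1 (snd yu)
            * (c * (((1 / \<sigma>) *\<^sub>R snd yu) \<bullet> (V (M (fst yu) + \<sigma> *\<^sub>R snd yu) - V (M (fst yu)))))
          \<partial>(lborel \<Otimes>\<^sub>M lborel)) = c * J V"
    unfolding J_def integral_mult_right_zero[symmetric]
    by (intro Bochner_Integration.integral_cong refl) (simp add: ac_simps)
  have "(\<integral>z. P z * (c * (norm (S z - V z))\<^sup>2) \<partial>lborel)
           + (\<integral>z. P z * ((2 *\<^sub>R F z - c *\<^sub>R S z) \<bullet> S z) \<partial>lborel)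
      = (\<integral>z. P z * (c * (norm (V z))\<^sup>2) + 2 * (P z * (F z \<bullet> S z)) - 2 * (P z * (c * (S z \<bullet> V z))) \<partial>lborel)"
    using integrable_error integrable_drift_score by (simp flip: expand)
  also have "\<dots> = (\<integral>z. P z * (c * (norm (V z))\<^sup>2) \<partial>lborel) + 2 * (\<integral>z. P z * (S z \<bullet> F z) \<partial>lborel)
        - 2 * (\<integral>z. c * (P z * (S z \<bullet> V z)) \<partial>lborel)"
    using integrable_V integrable_F_S integrable_S_V by (simp add: inner_commute mult.left_commute[of c])
  also have "\<dots> = (\<integral>z. P z * (c * (norm (V z))\<^sup>2) \<partial>lborel) + 2 * (c * J V) - 2 * J F"
    by (simp add: S_F S_V)
  finally show ?thesis
    unfolding J_V_scaled J_def .
qed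

end

lemma marg_measurable:
  assumes "q0 \<in> borel_measurable borel"
    and "\<And>k. k < n \<Longrightarrow> (\<lambda>z. f z (t k)) \<in> borel_measurable borel"
  shows "marg q0 f g t n \<in> borel_measurable borel"
  using assms(2)
proof (induction n)
  case 0
  with assms(1) show ?case by simp
next
  case (Suc n)
  then have [measurable]: "marg q0 f g t n \<in> borel_measurable borel"
    "(\<lambda>z. f z (t n)) \<in> borel_measurable borel"
    by auto
  show ?case
    unfolding marg.simps em_mu_def by measurable
qed

lemma marg_nonneg:
  assumes "\<And>z. 0 \<le> q0 z" and "\<And>k. k < n \<Longrightarrow> 0 \<le> em_sigma g t k"
  shows "0 \<le> marg q0 f g t n z"
  using assms(2)
proof (induction n arbitrary: z)
  case 0
  with assms(1) show ?case by simp
next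
  case (Suc n)
  then show ?case
    by (auto intro!: Bochner_Integration.integral_nonneg mult_nonneg_nonneg gauss_nonneg)
qed

lemma gauss_mixture_marg:
  assumes "q0 \<in> borel_measurable borel" and "\<And>z. 0 \<le> q0 z"
    and f_measurable: "\<And>k. k \<le> n \<Longrightarrow> (\<lambda>z. f z (t k)) \<in> borel_measurable borel"
    and sigma_pos: "\<And>k. k \<le> n \<Longrightarrow> 0 < em_sigma g t k"
    and "\<And>z. GDERIV (\<lambda>w. ln (marg q0 f g t (Suc n) w)) z :> S z"
    and "\<And>z. integrable lborel (\<lambda>y. (gauss (em_sigma g t n) (z - em_mu f t n y) * marg q0 f g t n y)
            *\<^sub>R (- (1 / (em_sigma g t n)\<^sup>2) *\<^sub>R (z - em_mu f t n y)))
      \<and> GDERIV (marg q0 f g t (Suc n)) z :> (\<integral>y. (gauss (em_sigma g t n) (z - em_mu f t n y) * marg q0 f g t n y)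
            *\<^sub>R (- (1 / (em_sigma g t n)\<^sup>2) *\<^sub>R (z - em_mu f t n y)) \<partial>lborel)"
  shows "gauss_mixture (marg q0 f g t n) (em_mu f t n) (em_sigma g t n) (marg q0 f g t (Suc n)) S"
proof
  have [measurable]: "(\<lambda>z. f z (t n)) \<in> borel_measurable borel"
    using f_measurable by simp
  show "em_mu f t n \<in> borel_measurable borel"
    unfolding em_mu_def by measurable
  show "marg q0 f g t n \<in> borel_measurable borel"
    using assms(1) f_measurable by (intro marg_measurable) auto
  show "0 \<le> marg q0 f g t n y" for y
    using assms(2) sigma_pos by (intro marg_nonneg) (auto intro: less_imp_le)
qed (use assms in auto)

lemma averaged_step_identity:
  fixes a b c j k :: "nat \<Rightarrow> real"
  assumes "\<And>n. n \<in> I \<Longrightarrow> a n + b n = c n + 2 * j n - 2 * k n"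
  shows "E + 1/2 * (sum a I / N) + 1/2 * (sum b I / N)
    = E + 1/2 * (sum c I / N) + sum j I / N - sum k I / N"
proof -
  have "sum a I + sum b I = sum c I + 2 * sum j I - 2 * sum k I"
    using assms by (simp add: sum_subtractf[symmetric] sum.distrib[symmetric] sum_distrib_left)
  then have "(sum a I + sum b I) / (2 * N) = (sum c I + 2 * sum j I - 2 * sum k I) / (2 * N)"
    by simp
  then show ?thesis
    by (simp add: add_divide_distrib diff_divide_distrib)
qed

theorem theorem1:
  fixes q0 :: "'a::euclidean_space \<Rightarrow> real"
    and f :: "'a \<Rightarrow> real \<Rightarrow> 'a" and g :: "real \<Rightarrow> real"
    and s :: "'a \<Rightarrow> real \<Rightarrow> 'a"
    and t :: "nat \<Rightarrow> real" and nf :: nat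
    and sc :: "nat \<Rightarrow> 'a \<Rightarrow> 'a"
    and q :: "nat \<Rightarrow> 'a \<Rightarrow> real" and mu :: "nat \<Rightarrow> 'a \<Rightarrow> 'a" and sig :: "nat \<Rightarrow> real"
  defines "q \<equiv> marg q0 f g t"
    and "mu \<equiv> em_mu f t"
    and "sig \<equiv> em_sigma g t"
  assumes nf_pos: "1 \<le> nf"
    and t0: "t 0 = 0"
    and t_incr: "\<forall>n < nf. t n < t (Suc n)"
    and sig_pos: "\<forall>n < nf. 0 < sig n"
    and q0_meas: "q0 \<in> borel_measurable lborel"
    and q0_nonneg: "\<forall>z. 0 \<le> q0 z"
    and q0_int: "integrable lborel q0"
    and q0_one: "(\<integral>z. q0 z \<partial>lborel) = 1"
    and f_meas: "\<forall>n \<le> nf. (\<lambda>z. f z (t n)) \<in> borel_measurable borel"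
    and s_meas: "\<forall>n \<le> nf. (\<lambda>z. s z (t n)) \<in> borel_measurable borel"
    \<comment> \<open>sc n z is the score \<nabla>_z log q_n(z)\<close>
    and score: "\<forall>n \<in> {1..nf}. \<forall>z. GDERIV (\<lambda>w. ln (q n w)) z :> sc n z"
    \<comment> \<open>differentiation under the integral sign in q_n = \<integral> q(z_n|z_{n-1}) q_{n-1}\<close>
    and diff_int: "\<forall>n \<in> {1..nf}. \<forall>z.
        integrable lborel (\<lambda>y. (gauss (sig (n - 1)) (z - mu (n - 1) y) * q (n - 1) y)
            *\<^sub>R (- (1 / (sig (n - 1))\<^sup>2) *\<^sub>R (z - mu (n - 1) y)))
      \<and> GDERIV (q n) z :> (\<integral>y. (gauss (sig (n - 1)) (z - mu (n - 1) y) * q (n - 1) y)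
            *\<^sub>R (- (1 / (sig (n - 1))\<^sup>2) *\<^sub>R (z - mu (n - 1) y)) \<partial>lborel)"
    \<comment> \<open>finiteness of all expectations involved\<close>
    and int_H: "integrable lborel (\<lambda>z. q nf z * ln (q nf z))"
    and int_1: "\<forall>n \<in> {1..nf}. integrable lborel
        (\<lambda>z. q n z * ((g (t n))\<^sup>2 * (norm (sc n z - s z (t n)))\<^sup>2))"
    and int_2: "\<forall>n \<in> {1..nf}. integrable lborel
        (\<lambda>z. q n z * ((2 *\<^sub>R f z (t n) - (g (t n))\<^sup>2 *\<^sub>R sc n z) \<bullet> sc n z))"
    and int_3: "\<forall>n \<in> {1..nf}. integrable lborel
        (\<lambda>z. q n z * ((g (t n))\<^sup>2 * (norm (s z (t n)))\<^sup>2))"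
    and int_4: "\<forall>n \<in> {1..nf}. integrable lborel
        (\<lambda>z. q n z * (f z (t n) \<bullet> sc n z))"
    and int_5: "\<forall>n \<in> {1..nf}. integrable lborel
        (\<lambda>z. q n z * ((g (t n))\<^sup>2 * (sc n z \<bullet> s z (t n))))"
    and int_6: "\<forall>n \<in> {1..nf}. integrable (lborel \<Otimes>\<^sub>M lborel)
        (\<lambda>yu. q (n - 1) (fst yu) * gauss 1 (snd yu)
           * (snd yu \<bullet> s (mu (n - 1) (fst yu) + sig (n - 1) *\<^sub>R snd yu) (t n)))"
    and int_7: "\<forall>n \<in> {1..nf}. integrable (lborel \<Otimes>\<^sub>M lborel)
        (\<lambda>yu. q (n - 1) (fst yu) * gauss 1 (snd yu)
           * (snd yu \<bullet> s (mu (n - 1) (fst yu)) (t n)))"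
    and int_8: "\<forall>n \<in> {1..nf}. integrable (lborel \<Otimes>\<^sub>M lborel)
        (\<lambda>yu. q (n - 1) (fst yu) * gauss 1 (snd yu)
           * (snd yu \<bullet> f (mu (n - 1) (fst yu) + sig (n - 1) *\<^sub>R snd yu) (t n)))"
    and int_9: "\<forall>n \<in> {1..nf}. integrable (lborel \<Otimes>\<^sub>M lborel)
        (\<lambda>yu. q (n - 1) (fst yu) * gauss 1 (snd yu)
           * (snd yu \<bullet> f (mu (n - 1) (fst yu)) (t n)))"
  shows
    "entropy (q nf)
       + 1/2 * EN nf q (\<lambda>n z. (g (t n))\<^sup>2 * (norm (sc n z - s z (t n)))\<^sup>2)
       + 1/2 * EN nf q (\<lambda>n z. (2 *\<^sub>R f z (t n) - (g (t n))\<^sup>2 *\<^sub>R sc n z) \<bullet> sc n z)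
     = entropy (q nf)
       + 1/2 * EN nf q (\<lambda>n z. (g (t n))\<^sup>2 * (norm (s z (t n)))\<^sup>2)
       + EJ nf q mu sig (\<lambda>n y u z. (g (t n))\<^sup>2
            * (((1 / sig (n - 1)) *\<^sub>R u) \<bullet> (s z (t n) - s (mu (n - 1) y) (t n))))
       - EJ nf q mu sig (\<lambda>n y u z.
            ((1 / sig (n - 1)) *\<^sub>R u) \<bullet> (f z (t n) - f (mu (n - 1) y) (t n)))"
proof -
  have mixture: "gauss_mixture (q (n - 1)) (mu (n - 1)) (sig (n - 1)) (q n) (sc n)"
    if n: "n \<in> {1..nf}" for n
  proof -
    from n have n_Suc: "Suc (n - 1) = n" by simp
    have "gauss_mixture (q (n - 1)) (mu (n - 1)) (sig (n - 1)) (q (Suc (n - 1))) (sc n)"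
      unfolding q_def mu_def sig_def
      using n q0_meas q0_nonneg f_meas sig_pos score diff_int
      by (intro gauss_mixture_marg) (auto simp: n_Suc q_def mu_def sig_def)
    with n_Suc show ?thesis by simp
  qed
  show ?thesis
    unfolding EN_def EJ_def
  proof (rule averaged_step_identity, goal_cases)
    case (1 n)
    then show ?case
      using f_meas s_meas int_1 int_2 int_3 int_4 int_5 int_6 int_7 int_8 int_9
      by (intro gauss_mixture.score_matching_identity[OF mixture[OF 1]]) auto
  qed
qed

end
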